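(* Let $\mathcal{G}$ be a finite-dimensional Lie algebra with Levi–Malcev decomposition $\mathcal{G}=N\ltimes S$, where $N$ is the radical and $S$ a semisimple (Levi) subalgebra, and let $\mathcal{S}$ be a finite abelian semigroup. Let $\mathcal{G}_{\mathcal{S}}=\mathcal{S}\otimes\mathcal{G}$ be the $\mathcal{S}$-expanded algebra, $E_N=\mathcal{S}\otimes N$ and $E_S=\mathcal{S}\otimes S$, so that $E_S$ is a subalgebra (the expansion of $S$), and let $E_S=N'\ltimes S_{\mathrm{exp}}$ be a Levi–Malcev decomposition of $E_S$, with $N'$ the radical of $E_S$ and $S_{\mathrm{exp}}$ semisimple. Then $N_{\mathrm{exp}}=E_N+N'$ is the radical of $\mathcal{G}_{\mathcal{S}}$, and $\mathcal{G}_{\mathcal{S}}=N_{\mathrm{exp}}\ltimes S_{\mathrm{exp}}$ is a Levi–Malcev decomposition of $\mathcal{G}_{\mathcal{S}}$.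
   Context: For a Lie algebra $\mathcal{G}$ with basis $\{X_i\}$, $[X_i,X_j]=C_{ij}^kX_k$, and a finite abelian semigroup $\mathcal{S}=\{\lambda_\alpha\}$ with 2-selector $K_{\alpha\beta}^\gamma$ ($=1$ if $\lambda_\alpha\lambda_\beta=\lambda_\gamma$, else $0$), the expanded algebra $\mathcal{S}\otimes\mathcal{G}$ has basis $\lambda_\alpha\otimes X_i$ and bracket $[\lambda_\alpha\otimes X_i,\lambda_\beta\otimes X_j]=K_{\alpha\beta}^\gamma C_{ij}^k\,\lambda_\gamma\otimes X_k$; for a subspace $V\subset\mathcal{G}$, $\mathcal{S}\otimes V$ denotes the span of $\lambda_\alpha\otimes v$, $v\in V$. The radical of a Lie algebra is its maximal solvable ideal; a Levi–Malcev decomposition writes the algebra as a semidirect sum of its radical and a semisimple subalgebra. *)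

theory Defs
  imports Main
begin

text \<open>A vector of a Lie algebra with
  basis indexed by the finite type 'a over the field 'k is a function 'a \<Rightarrow> 'k.
  A bracket is any binary operation on such vectors; subspaces, ideals, derived series,
  solvability, radical, semisimplicity and Levi-Malcev decompositions are defined
  relative to a given bracket.\<close>

definition vzero :: "'a \<Rightarrow> 'k::field" where
  "vzero = (\<lambda>_. 0)"

definition vadd :: "('a \<Rightarrow> 'k::field) \<Rightarrow> ('a \<Rightarrow> 'k) \<Rightarrow> ('a \<Rightarrow> 'k)" where
  "vadd x y = (\<lambda>a. x a + y a)"

definition vscale :: "'k::field \<Rightarrow> ('a \<Rightarrow> 'k) \<Rightarrow> ('a \<Rightarrow> 'k)" where
  "vscale c x = (\<lambda>a. c * x a)"

definition is_subspace :: "('a \<Rightarrow> 'k::field) set \<Rightarrow> bool" where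
  "is_subspace V \<longleftrightarrow> vzero \<in> V \<and> (\<forall>x\<in>V. \<forall>y\<in>V. vadd x y \<in> V)
      \<and> (\<forall>c. \<forall>x\<in>V. vscale c x \<in> V)"

definition lspan :: "('a \<Rightarrow> 'k::field) set \<Rightarrow> ('a \<Rightarrow> 'k) set" where
  "lspan A = \<Inter>{W. is_subspace W \<and> A \<subseteq> W}"

definition ssum :: "('a \<Rightarrow> 'k::field) set \<Rightarrow> ('a \<Rightarrow> 'k) set \<Rightarrow> ('a \<Rightarrow> 'k) set" where
  "ssum U V = {vadd u v | u v. u \<in> U \<and> v \<in> V}"

type_synonym ('a, 'k) bracket = "('a \<Rightarrow> 'k) \<Rightarrow> ('a \<Rightarrow> 'k) \<Rightarrow> ('a \<Rightarrow> 'k)"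

definition is_lie_bracket :: "('a, 'k::field) bracket \<Rightarrow> bool" where
  "is_lie_bracket br \<longleftrightarrow>
     (\<forall>x y z. br (vadd x y) z = vadd (br x z) (br y z)) \<and>
     (\<forall>x y z. br x (vadd y z) = vadd (br x y) (br x z)) \<and>
     (\<forall>c x y. br (vscale c x) y = vscale c (br x y)) \<and>
     (\<forall>c x y. br x (vscale c y) = vscale c (br x y)) \<and>
     (\<forall>x. br x x = vzero) \<and>
     (\<forall>x y z. vadd (br x (br y z)) (vadd (br y (br z x)) (br z (br x y))) = vzero)"

definition is_subalgebra :: "('a, 'k::field) bracket \<Rightarrow> ('a \<Rightarrow> 'k) set \<Rightarrow> bool" where
  "is_subalgebra br V \<longleftrightarrow> is_subspace V \<and> (\<forall>x\<in>V. \<forall>y\<in>V. br x y \<in> V)"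

definition is_ideal :: "('a, 'k::field) bracket \<Rightarrow> ('a \<Rightarrow> 'k) set \<Rightarrow> ('a \<Rightarrow> 'k) set \<Rightarrow> bool" where
  "is_ideal br L I \<longleftrightarrow> is_subspace I \<and> I \<subseteq> L \<and> (\<forall>x\<in>L. \<forall>y\<in>I. br x y \<in> I)"

fun derived :: "('a, 'k::field) bracket \<Rightarrow> ('a \<Rightarrow> 'k) set \<Rightarrow> nat \<Rightarrow> ('a \<Rightarrow> 'k) set" where
  "derived br V 0 = V"
| "derived br V (Suc n) =
     lspan {br x y | x y. x \<in> derived br V n \<and> y \<in> derived br V n}"

definition is_solvable :: "('a, 'k::field) bracket \<Rightarrow> ('a \<Rightarrow> 'k) set \<Rightarrow> bool" where
  "is_solvable br V \<longleftrightarrow> (\<exists>n. derived br V n = {vzero})"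

definition is_radical :: "('a, 'k::field) bracket \<Rightarrow> ('a \<Rightarrow> 'k) set \<Rightarrow> ('a \<Rightarrow> 'k) set \<Rightarrow> bool" where
  "is_radical br L R \<longleftrightarrow> is_ideal br L R \<and> is_solvable br R \<and>
     (\<forall>I. is_ideal br L I \<and> is_solvable br I \<and> R \<subseteq> I \<longrightarrow> I = R)"

definition is_semisimple :: "('a, 'k::field) bracket \<Rightarrow> ('a \<Rightarrow> 'k) set \<Rightarrow> bool" where
  "is_semisimple br S \<longleftrightarrow> is_subalgebra br S \<and>
     (\<forall>I. is_ideal br S I \<and> is_solvable br I \<longrightarrow> I = {vzero})"

definition is_levi_decomp :: "('a, 'k::field) bracket \<Rightarrow> ('a \<Rightarrow> 'k) set \<Rightarrow> ('a \<Rightarrow> 'k) set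
    \<Rightarrow> ('a \<Rightarrow> 'k) set \<Rightarrow> bool" where
  "is_levi_decomp br L R S \<longleftrightarrow> is_subalgebra br L \<and> is_radical br L R \<and>
     is_semisimple br S \<and> S \<subseteq> L \<and> R \<inter> S = {vzero} \<and> ssum R S = L"

text \<open>Bracket from structure constants: [X_i, X_j] = C_ij^k X_k.\<close>
definition sc_bracket :: "('i \<Rightarrow> 'i \<Rightarrow> 'i \<Rightarrow> 'k::field) \<Rightarrow> ('i::finite, 'k) bracket" where
  "sc_bracket C x y = (\<lambda>k. \<Sum>i\<in>UNIV. \<Sum>j\<in>UNIV. C i j k * x i * y j)"

text \<open>S-expanded bracket on S \<otimes> G, basis \<lambda>_\<alpha> \<otimes> X_i indexed by pairs (\<alpha>, i):
  [\<lambda>_\<alpha> \<otimes> X_i, \<lambda>_\<beta> \<otimes> X_j] = K_\<alpha>\<beta>^\<gamma> C_ij^k \<lambda>_\<gamma> \<otimes> X_k.\<close>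
definition selector :: "'s::ab_semigroup_mult \<Rightarrow> 's \<Rightarrow> 's \<Rightarrow> 'k::field" where
  "selector \<alpha> \<beta> \<gamma> = (if \<alpha> * \<beta> = \<gamma> then 1 else 0)"

definition exp_bracket :: "('i \<Rightarrow> 'i \<Rightarrow> 'i \<Rightarrow> 'k::field)
    \<Rightarrow> ('s::{finite,ab_semigroup_mult} \<times> 'i::finite, 'k) bracket" where
  "exp_bracket C x y = (\<lambda>(\<gamma>, k). \<Sum>\<alpha>\<in>UNIV. \<Sum>\<beta>\<in>UNIV. \<Sum>i\<in>UNIV. \<Sum>j\<in>UNIV.
      selector \<alpha> \<beta> \<gamma> * C i j k * x (\<alpha>, i) * y (\<beta>, j))"

definition tens :: "'s \<Rightarrow> ('i \<Rightarrow> 'k::field) \<Rightarrow> ('s \<times> 'i \<Rightarrow> 'k)" where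
  "tens \<alpha> v = (\<lambda>(\<beta>, i). if \<beta> = \<alpha> then v i else 0)"

definition tens_space :: "('i \<Rightarrow> 'k::field) set \<Rightarrow> ('s \<times> 'i \<Rightarrow> 'k) set" where
  "tens_space V = lspan {tens \<alpha> v | \<alpha> v. v \<in> V}"

end

theory Submission
  imports Defs
begin

text \<open>Componentwise, \<open>\<S> \<otimes> V\<close> consists of the vectors all of whose
  \<open>\<lambda>\<^sub>\<alpha>\<close>-components lie in \<open>V\<close>, and the \<open>\<lambda>\<^sub>\<gamma>\<close>-component of an expanded bracket
  \<open>[x, y]\<close> is the sum of the brackets \<open>[x\<^sub>\<alpha>, y\<^sub>\<beta>]\<close> over \<open>\<alpha>\<beta> = \<gamma>\<close>. Hence
  \<open>E\<^sub>N = \<S> \<otimes> N\<close> is a solvable two-sided ideal of the expanded algebra, and this algebra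
  is the direct sum of \<open>E\<^sub>N\<close> and the subalgebra \<open>E\<^sub>S\<close>.

  The rest holds for any algebra \<open>L = E \<oplus> F\<close> with \<open>E\<close> a solvable ideal and
  \<open>F = N' \<ltimes> S'\<close>: the ideal \<open>E + N'\<close> is solvable since its derived series enters
  \<open>E\<close> after finitely many steps, and it is maximal since a solvable ideal
  \<open>I \<supseteq> E + N'\<close> equals \<open>E + (I \<inter> F)\<close>, where \<open>I \<inter> F\<close> is a solvable ideal of \<open>F\<close>
  containing \<open>N'\<close>, hence equal to \<open>N'\<close>.\<close>

lemma vadd_apply [simp]: "vadd x y a = x a + y a"
  by (simp add: vadd_def)

lemma vscale_apply [simp]: "vscale c x a = c * x a"
  by (simp add: vscale_def)

lemma vzero_apply [simp]: "vzero a = 0"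
  by (simp add: vzero_def)

lemma vadd_vzero_left [simp]: "vadd vzero x = x"
  by (simp add: fun_eq_iff)

lemma vadd_vzero_right [simp]: "vadd x vzero = x"
  by (simp add: fun_eq_iff)

lemma vadd_assoc: "vadd (vadd x y) z = vadd x (vadd y z)"
  by (simp add: fun_eq_iff add.assoc)

lemma vadd_eq_imp_right: "x = vadd u v \<Longrightarrow> v = vadd x (vscale (-1) u)"
  by (simp add: fun_eq_iff)

lemma vadd_eq_imp_left: "x = vadd u v \<Longrightarrow> u = vadd x (vscale (-1) v)"
  by (simp add: fun_eq_iff)

lemma subspace_zero: "is_subspace V \<Longrightarrow> vzero \<in> V"
  unfolding is_subspace_def by blast

lemma subspace_add: "is_subspace V \<Longrightarrow> x \<in> V \<Longrightarrow> y \<in> V \<Longrightarrow> vadd x y \<in> V"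
  unfolding is_subspace_def by blast

lemma subspace_diff: "is_subspace V \<Longrightarrow> x \<in> V \<Longrightarrow> y \<in> V \<Longrightarrow> vadd x (vscale (-1) y) \<in> V"
  unfolding is_subspace_def by blast

lemma subspace_Int: "is_subspace U \<Longrightarrow> is_subspace V \<Longrightarrow> is_subspace (U \<inter> V)"
  unfolding is_subspace_def by auto

lemma subspace_sum:
  assumes "is_subspace V" "finite A" "\<And>a. a \<in> A \<Longrightarrow> f a \<in> V"
  shows "(\<lambda>k. \<Sum>a\<in>A. f a k) \<in> V"
  using assms(2,3)
proof (induction A rule: finite_induct)
  case empty
  then show ?case
    using subspace_zero[OF assms(1)] by (simp add: vzero_def)
next
  case (insert a A)
  then have "(\<lambda>k. \<Sum>b\<in>insert a A. f b k) = vadd (f a) (\<lambda>k. \<Sum>b\<in>A. f b k)"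
    by (simp add: fun_eq_iff)
  with insert show ?case
    by (simp add: subspace_add[OF assms(1)])
qed

lemma subspace_lspan: "is_subspace (lspan A)"
  unfolding lspan_def is_subspace_def by auto

lemma lspan_superset: "A \<subseteq> lspan A"
  unfolding lspan_def by auto

lemma lspan_least: "is_subspace W \<Longrightarrow> A \<subseteq> W \<Longrightarrow> lspan A \<subseteq> W"
  unfolding lspan_def by auto

lemma lspan_mono: "A \<subseteq> B \<Longrightarrow> lspan A \<subseteq> lspan B"
  unfolding lspan_def by auto

lemma ssumI [intro]: "u \<in> U \<Longrightarrow> v \<in> V \<Longrightarrow> vadd u v \<in> ssum U V"
  unfolding ssum_def by blast

lemma ssumE [elim]:
  assumes "x \<in> ssum U V"
  obtains u v where "u \<in> U" "v \<in> V" "x = vadd u v"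
  using assms unfolding ssum_def by blast

lemma ssum_upper_left: "vzero \<in> V \<Longrightarrow> U \<subseteq> ssum U V"
  using ssumI[of _ U vzero V] by auto

lemma ssum_upper_right: "vzero \<in> U \<Longrightarrow> V \<subseteq> ssum U V"
  using ssumI[of vzero U _ V] by auto

lemma subspace_ssum:
  assumes U: "is_subspace U" and V: "is_subspace V"
  shows "is_subspace (ssum U V)"
  unfolding is_subspace_def
proof (intro conjI ballI allI)
  show "vzero \<in> ssum U V"
    using ssum_upper_left subspace_zero[OF U] subspace_zero[OF V] by blast
next
  fix x y assume "x \<in> ssum U V" "y \<in> ssum U V"
  then obtain u v u' v' where "u \<in> U" "v \<in> V" "u' \<in> U" "v' \<in> V"
    and "x = vadd u v" "y = vadd u' v'"
    by (meson ssumE)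
  moreover have "vadd (vadd u v) (vadd u' v') = vadd (vadd u u') (vadd v v')"
    by (simp add: fun_eq_iff algebra_simps)
  ultimately show "vadd x y \<in> ssum U V"
    by (simp add: ssumI subspace_add U V)
next
  fix c x assume "x \<in> ssum U V"
  then obtain u v where "u \<in> U" "v \<in> V" "x = vadd u v"
    by (rule ssumE)
  moreover have "vscale c (vadd u v) = vadd (vscale c u) (vscale c v)"
    by (simp add: fun_eq_iff algebra_simps)
  ultimately show "vscale c x \<in> ssum U V"
    using U V unfolding is_subspace_def by (simp add: ssumI)
qed

lemma ssum_assoc: "ssum (ssum U V) W = ssum U (ssum V W)"
proof (intro equalityI subsetI)
  fix x assume "x \<in> ssum (ssum U V) W"
  then obtain u v w where "u \<in> U" "v \<in> V" "w \<in> W" "x = vadd (vadd u v) w"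
    by (metis ssumE)
  then show "x \<in> ssum U (ssum V W)"
    by (simp add: ssumI vadd_assoc)
next
  fix x assume "x \<in> ssum U (ssum V W)"
  then obtain u v w where "u \<in> U" "v \<in> V" "w \<in> W" "x = vadd u (vadd v w)"
    by (metis ssumE)
  then show "x \<in> ssum (ssum U V) W"
    by (simp add: ssumI flip: vadd_assoc)
qed

lemma ssum_vzero_right [simp]: "ssum U {vzero} = U"
  by (auto elim: ssumE dest: ssumI[of _ U vzero "{vzero}"])

lemma derived_subspace: "is_subspace V \<Longrightarrow> is_subspace (derived br V n)"
  by (cases n) (auto simp: subspace_lspan)

lemma derived_mono: "A \<subseteq> B \<Longrightarrow> derived br A n \<subseteq> derived br B n"
  by (induction n) (simp, simp, rule lspan_mono, blast)

lemma derived_derived: "derived br (derived br A m) n = derived br A (m + n)"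
  by (induction n) auto

lemma bracket_in_derived_Suc:
  "x \<in> derived br V n \<Longrightarrow> y \<in> derived br V n \<Longrightarrow> br x y \<in> derived br V (Suc n)"
  using lspan_superset by fastforce

lemma solvable_iff_derived_subset:
  "is_subspace V \<Longrightarrow> is_solvable br V \<longleftrightarrow> (\<exists>n. derived br V n \<subseteq> {vzero})"
  unfolding is_solvable_def using derived_subspace subspace_zero by blast

lemma solvable_subset:
  assumes "is_subspace J" "J \<subseteq> I" "is_solvable br I"
  shows "is_solvable br J"
proof -
  obtain n where "derived br I n = {vzero}"
    using assms(3) unfolding is_solvable_def by blast
  then have "derived br J n \<subseteq> {vzero}"
    using derived_mono[OF assms(2)] by blast
  then show ?thesis
    using solvable_iff_derived_subset[OF assms(1)] by blast
qed

subsection \<open>Extending a Levi decomposition across a solvable ideal\<close>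

text \<open>No antisymmetry is assumed of \<open>br\<close>, so \<open>E\<close> is required to absorb brackets on both sides.\<close>

locale solvable_ideal_split =
  fixes br :: "('a, 'k::field) bracket" and E F :: "('a \<Rightarrow> 'k) set"
  assumes bracket_add_left: "br (vadd x y) z = vadd (br x z) (br y z)"
    and bracket_add_right: "br x (vadd y z) = vadd (br x y) (br x z)"
    and subspace_E: "is_subspace E"
    and bracket_E_left: "y \<in> E \<Longrightarrow> br x y \<in> E"
    and bracket_E_right: "x \<in> E \<Longrightarrow> br x y \<in> E"
    and solvable_E: "is_solvable br E"
    and E_Int_F: "E \<inter> F = {vzero}"
    and E_ssum_F: "ssum E F = UNIV"
    and subalgebra_F: "is_subalgebra br F"
begin

lemma subspace_F: "is_subspace F"
  using subalgebra_F unfolding is_subalgebra_def by blast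

lemma subspace_eq_ssum_Int_F:
  assumes I: "is_subspace I" "E \<subseteq> I"
  shows "I = ssum E (I \<inter> F)"
proof (intro equalityI subsetI)
  fix x assume x: "x \<in> I"
  obtain e f where e: "e \<in> E" and f: "f \<in> F" and xef: "x = vadd e f"
    using E_ssum_F by (metis UNIV_I ssumE)
  have "f \<in> I"
    using vadd_eq_imp_right[OF xef] subspace_diff[OF I(1) x] e I(2) by auto
  with e f xef show "x \<in> ssum E (I \<inter> F)"
    by (simp add: ssumI)
next
  fix x assume "x \<in> ssum E (I \<inter> F)"
  then show "x \<in> I"
    using I subspace_add by (auto elim!: ssumE)
qed

lemma ssum_Int_subset_F:
  assumes M: "M \<subseteq> F" and V: "V \<subseteq> F"
  shows "ssum E M \<inter> V = M \<inter> V"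
proof (intro equalityI subsetI)
  fix x assume "x \<in> ssum E M \<inter> V"
  then obtain e m where e: "e \<in> E" and m: "m \<in> M" and xem: "x = vadd e m" and xV: "x \<in> V"
    by blast
  have "e \<in> F"
    using vadd_eq_imp_left[OF xem] subspace_diff[OF subspace_F] xV V m M by auto
  then have "e = vzero"
    using e E_Int_F by blast
  then show "x \<in> M \<inter> V"
    using m xem xV by simp
next
  fix x assume "x \<in> M \<inter> V"
  then show "x \<in> ssum E M \<inter> V"
    using ssum_upper_right subspace_zero[OF subspace_E] by blast
qed

lemma ideal_ssum:
  assumes M: "is_ideal br F M"
  shows "is_ideal br UNIV (ssum E M)"
  unfolding is_ideal_def
proof (intro conjI ballI subset_UNIV)
  show "is_subspace (ssum E M)"
    using M subspace_E subspace_ssum unfolding is_ideal_def by blast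
next
  fix x y assume "y \<in> ssum E M"
  then obtain e m where e: "e \<in> E" and m: "m \<in> M" and y: "y = vadd e m"
    by (rule ssumE)
  obtain e' f where e': "e' \<in> E" and f: "f \<in> F" and x: "x = vadd e' f"
    using E_ssum_F by (metis UNIV_I ssumE)
  have "br x y = vadd (vadd (br x e) (br e' m)) (br f m)"
    by (simp add: x y bracket_add_left bracket_add_right vadd_assoc)
  moreover have "vadd (br x e) (br e' m) \<in> E"
    using e e' by (simp add: bracket_E_left bracket_E_right subspace_add subspace_E)
  moreover have "br f m \<in> M"
    using M f m unfolding is_ideal_def by blast
  ultimately show "br x y \<in> ssum E M"
    by (simp add: ssumI)
qed

lemma derived_ssum_subset:
  assumes M: "is_subspace M"
  shows "derived br (ssum E M) n \<subseteq> ssum E (derived br M n)"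
proof (induction n)
  case 0
  then show ?case by simp
next
  case (Suc n)
  have "br x y \<in> ssum E (derived br M (Suc n))"
    if xy: "x \<in> derived br (ssum E M) n" "y \<in> derived br (ssum E M) n" for x y
  proof -
    obtain e d where e: "e \<in> E" and d: "d \<in> derived br M n" and x: "x = vadd e d"
      using xy(1) Suc.IH by blast
    obtain e' d' where e': "e' \<in> E" and d': "d' \<in> derived br M n" and y: "y = vadd e' d'"
      using xy(2) Suc.IH by blast
    have "br x y = vadd (vadd (vadd (br e e') (br d e')) (br e d')) (br d d')"
      by (simp add: x y bracket_add_left bracket_add_right vadd_assoc)
    moreover have "vadd (vadd (br e e') (br d e')) (br e d') \<in> E"
      using e e' by (simp add: bracket_E_left bracket_E_right subspace_add subspace_E)
    moreover have "br d d' \<in> derived br M (Suc n)"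
      using d d' by (rule bracket_in_derived_Suc)
    ultimately show ?thesis
      by (simp add: ssumI)
  qed
  then show ?case
    unfolding derived.simps(2)[of br "ssum E M"]
    by (intro lspan_least subspace_ssum subspace_E derived_subspace M) auto
qed

lemma solvable_ssum:
  assumes M: "is_subspace M" "is_solvable br M"
  shows "is_solvable br (ssum E M)"
proof -
  obtain m where m: "derived br M m = {vzero}"
    using M(2) unfolding is_solvable_def by blast
  obtain k where k: "derived br E k = {vzero}"
    using solvable_E unfolding is_solvable_def by blast
  have "derived br (ssum E M) m \<subseteq> E"
    using derived_ssum_subset[OF M(1), of m] by (simp add: m)
  then have "derived br (derived br (ssum E M) m) k \<subseteq> derived br E k"
    by (rule derived_mono)
  then have "derived br (ssum E M) (m + k) \<subseteq> {vzero}"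
    by (simp add: derived_derived k)
  then show ?thesis
    using solvable_iff_derived_subset M(1) subspace_E subspace_ssum by blast
qed

lemma radical_ssum:
  assumes M: "is_radical br F M"
  shows "is_radical br UNIV (ssum E M)"
  unfolding is_radical_def
proof (intro conjI allI impI)
  have M_ideal: "is_ideal br F M" and M_solvable: "is_solvable br M"
    and M_max: "\<And>J. is_ideal br F J \<Longrightarrow> is_solvable br J \<Longrightarrow> M \<subseteq> J \<Longrightarrow> J = M"
    using M unfolding is_radical_def by blast+
  then have M_sub: "is_subspace M" "M \<subseteq> F"
    unfolding is_ideal_def by blast+
  show "is_ideal br UNIV (ssum E M)"
    using M_ideal by (rule ideal_ssum)
  show "is_solvable br (ssum E M)"
    using M_sub(1) M_solvable by (rule solvable_ssum)
  fix I assume "is_ideal br UNIV I \<and> is_solvable br I \<and> ssum E M \<subseteq> I"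
  then have I_ideal: "is_ideal br UNIV I" and I_solvable: "is_solvable br I"
    and EM_I: "ssum E M \<subseteq> I"
    by blast+
  have I_sub: "is_subspace I"
    using I_ideal unfolding is_ideal_def by blast
  have IF_sub: "is_subspace (I \<inter> F)"
    using I_sub subspace_F by (rule subspace_Int)
  have "is_ideal br F (I \<inter> F)"
    using IF_sub I_ideal subalgebra_F unfolding is_ideal_def is_subalgebra_def by blast
  moreover have "is_solvable br (I \<inter> F)"
    using IF_sub I_solvable by (blast intro: solvable_subset)
  moreover have "M \<subseteq> I \<inter> F"
    using EM_I M_sub ssum_upper_right[OF subspace_zero[OF subspace_E]] by blast
  ultimately have "I \<inter> F = M"
    by (rule M_max)
  moreover have "E \<subseteq> I"
    using EM_I ssum_upper_left[OF subspace_zero[OF M_sub(1)]] by blast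
  ultimately show "I = ssum E M"
    using subspace_eq_ssum_Int_F[OF I_sub] by metis
qed

lemma levi_decomp_ssum:
  assumes "is_levi_decomp br F M S'"
  shows "is_levi_decomp br UNIV (ssum E M) S'"
proof -
  have M: "is_radical br F M" and S': "is_semisimple br S'" "S' \<subseteq> F"
    and M_S': "M \<inter> S' = {vzero}" "ssum M S' = F"
    using assms unfolding is_levi_decomp_def by blast+
  have "M \<subseteq> F"
    using M unfolding is_radical_def is_ideal_def by blast
  then have "ssum E M \<inter> S' = {vzero}"
    using ssum_Int_subset_F S'(2) M_S'(1) by simp
  moreover have "ssum (ssum E M) S' = UNIV"
    by (simp add: ssum_assoc M_S'(2) E_ssum_F)
  moreover have "is_subalgebra br UNIV"
    unfolding is_subalgebra_def is_subspace_def by blast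
  ultimately show ?thesis
    unfolding is_levi_decomp_def using radical_ssum[OF M] S' by blast
qed

end

subsection \<open>The expanded algebra\<close>

definition slice :: "'s \<Rightarrow> ('s \<times> 'i \<Rightarrow> 'k) \<Rightarrow> 'i \<Rightarrow> 'k" where
  "slice \<alpha> x = (\<lambda>i. x (\<alpha>, i))"

definition slicewise :: "('i \<Rightarrow> 'k) set \<Rightarrow> ('s \<times> 'i \<Rightarrow> 'k) set" where
  "slicewise V = {x. \<forall>\<alpha>. slice \<alpha> x \<in> V}"

lemma slice_apply [simp]: "slice \<alpha> x i = x (\<alpha>, i)"
  by (simp add: slice_def)

lemma slice_vadd [simp]: "slice \<alpha> (vadd x y) = vadd (slice \<alpha> x) (slice \<alpha> y)"
  by (simp add: fun_eq_iff)

lemma slice_vscale [simp]: "slice \<alpha> (vscale c x) = vscale c (slice \<alpha> x)"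
  by (simp add: fun_eq_iff)

lemma slice_vzero [simp]: "slice \<alpha> vzero = vzero"
  by (simp add: fun_eq_iff)

lemma slice_eq_vzero_iff: "(\<forall>\<alpha>. slice \<alpha> x = vzero) \<longleftrightarrow> x = vzero"
  by (auto simp: fun_eq_iff)

lemma subspace_slicewise: "is_subspace V \<Longrightarrow> is_subspace (slicewise V)"
  unfolding is_subspace_def slicewise_def by simp

lemma slicewise_vzero [simp]: "slicewise {vzero} = {vzero}"
  unfolding slicewise_def using slice_eq_vzero_iff by auto

lemma slicewise_Int: "slicewise (U \<inter> V) = slicewise U \<inter> slicewise V"
  unfolding slicewise_def by auto

lemma slicewise_UNIV [simp]: "slicewise UNIV = UNIV"
  unfolding slicewise_def by simp

lemma ssum_slicewise: "ssum (slicewise U) (slicewise V) = slicewise (ssum U V)"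
proof (intro equalityI subsetI)
  fix x assume "x \<in> ssum (slicewise U) (slicewise V)"
  then show "x \<in> slicewise (ssum U V)"
    unfolding slicewise_def by (auto simp: ssumI)
next
  fix x assume "x \<in> slicewise (ssum U V)"
  then have "\<forall>\<alpha>. \<exists>u v. u \<in> U \<and> v \<in> V \<and> slice \<alpha> x = vadd u v"
    unfolding slicewise_def by blast
  then obtain u v where uv: "\<And>\<alpha>. u \<alpha> \<in> U \<and> v \<alpha> \<in> V \<and> slice \<alpha> x = vadd (u \<alpha>) (v \<alpha>)"
    by metis
  have "(\<lambda>(\<alpha>, i). u \<alpha> i) \<in> slicewise U" "(\<lambda>(\<alpha>, i). v \<alpha> i) \<in> slicewise V"
    using uv unfolding slicewise_def slice_def by simp_all
  moreover have "x (\<alpha>, i) = u \<alpha> i + v \<alpha> i" for \<alpha> i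
    using uv[of \<alpha>] by (metis slice_apply vadd_apply)
  then have "x = vadd (\<lambda>(\<alpha>, i). u \<alpha> i) (\<lambda>(\<alpha>, i). v \<alpha> i)"
    by (simp add: fun_eq_iff)
  ultimately show "x \<in> ssum (slicewise U) (slicewise V)"
    by (simp add: ssumI)
qed

lemma slice_tens: "slice \<beta> (tens \<alpha> v) = (if \<beta> = \<alpha> then v else vzero)"
  by (simp add: fun_eq_iff tens_def)

lemma tens_space_eq_slicewise:
  assumes V: "is_subspace V"
  shows "(tens_space V :: ('s::finite \<times> 'i \<Rightarrow> 'k::field) set) = slicewise V"
proof
  have "tens \<alpha> v \<in> slicewise V" if "v \<in> V" for \<alpha> :: 's and v
    using that subspace_zero[OF V]
    unfolding slicewise_def by (simp add: slice_tens)
  then show "tens_space V \<subseteq> (slicewise V :: ('s \<times> 'i \<Rightarrow> 'k) set)"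
    unfolding tens_space_def by (intro lspan_least subspace_slicewise V) blast
next
  show "slicewise V \<subseteq> (tens_space V :: ('s \<times> 'i \<Rightarrow> 'k) set)"
  proof
    fix x :: "'s \<times> 'i \<Rightarrow> 'k" assume x: "x \<in> slicewise V"
    have "x = (\<lambda>p. \<Sum>\<alpha>\<in>UNIV. tens \<alpha> (slice \<alpha> x) p)"
      by (simp add: fun_eq_iff tens_def)
    also have "\<dots> \<in> tens_space V"
      unfolding tens_space_def
    proof (rule subspace_sum[OF subspace_lspan finite_UNIV])
      fix \<alpha>
      have "tens \<alpha> (slice \<alpha> x) \<in> {tens \<alpha> v |\<alpha> v. v \<in> V}"
        using x unfolding slicewise_def by blast
      then show "tens \<alpha> (slice \<alpha> x) \<in> lspan {tens \<alpha> v |\<alpha> v. v \<in> V}"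
        by (rule subsetD[OF lspan_superset])
    qed
    finally show "x \<in> tens_space V" .
  qed
qed

lemma slice_exp_bracket:
  "slice \<gamma> (exp_bracket C x y) =
    (\<lambda>k. \<Sum>\<alpha>\<in>UNIV. \<Sum>\<beta>\<in>UNIV.
       (if \<alpha> * \<beta> = \<gamma> then sc_bracket C (slice \<alpha> x) (slice \<beta> y) else vzero) k)"
  by (auto simp: fun_eq_iff exp_bracket_def selector_def sc_bracket_def intro!: sum.cong)

lemma exp_bracket_in_slicewise:
  assumes V: "is_subspace V"
    and slices: "\<And>\<alpha> \<beta>. sc_bracket C (slice \<alpha> x) (slice \<beta> y) \<in> V"
  shows "exp_bracket C x y \<in> slicewise V"
  unfolding slicewise_def
proof (intro CollectI allI)
  fix \<gamma>
  show "slice \<gamma> (exp_bracket C x y) \<in> V"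
    unfolding slice_exp_bracket
    by (intro subspace_sum V) (simp_all add: slices subspace_zero[OF V])
qed

lemma exp_bracket_add_left:
  "exp_bracket C (vadd x y) z = vadd (exp_bracket C x z) (exp_bracket C y z)"
  by (simp add: exp_bracket_def fun_eq_iff distrib_left distrib_right sum.distrib split_def)

lemma exp_bracket_add_right:
  "exp_bracket C x (vadd y z) = vadd (exp_bracket C x y) (exp_bracket C x z)"
  by (simp add: exp_bracket_def fun_eq_iff distrib_left distrib_right sum.distrib split_def)

lemma derived_slicewise_subset:
  fixes C :: "'i::finite \<Rightarrow> 'i \<Rightarrow> 'i \<Rightarrow> 'k::field"
  assumes V: "is_subspace V"
  shows "derived (exp_bracket C) (slicewise V :: ('s::{finite,ab_semigroup_mult} \<times> 'i \<Rightarrow> 'k) set) n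
    \<subseteq> slicewise (derived (sc_bracket C) V n)"
proof (induction n)
  case 0
  then show ?case by simp
next
  case (Suc n)
  have "exp_bracket C x y \<in> slicewise (derived (sc_bracket C) V (Suc n))"
    if xy: "x \<in> derived (exp_bracket C) (slicewise V) n" "y \<in> derived (exp_bracket C) (slicewise V) n"
    for x y :: "'s \<times> 'i \<Rightarrow> 'k"
  proof -
    have "slice \<alpha> x \<in> derived (sc_bracket C) V n" for \<alpha>
      using xy(1) Suc.IH unfolding slicewise_def by blast
    moreover have "slice \<alpha> y \<in> derived (sc_bracket C) V n" for \<alpha>
      using xy(2) Suc.IH unfolding slicewise_def by blast
    ultimately show ?thesis
      by (intro exp_bracket_in_slicewise derived_subspace V bracket_in_derived_Suc)
  qed
  then show ?case
    unfolding derived.simps(2)[of "exp_bracket C" "slicewise V"]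
    by (intro lspan_least subspace_slicewise derived_subspace V) auto
qed

lemma solvable_slicewise:
  assumes "is_subspace V" "is_solvable (sc_bracket C) V"
  shows "is_solvable (exp_bracket C) (slicewise V)"
proof -
  obtain n where "derived (sc_bracket C) V n = {vzero}"
    using assms(2) unfolding is_solvable_def by blast
  then have "derived (exp_bracket C) (slicewise V) n \<subseteq> {vzero}"
    using derived_slicewise_subset[OF assms(1), of C n] by simp
  then show ?thesis
    using solvable_iff_derived_subset subspace_slicewise[OF assms(1)] by blast
qed

lemma lie_bracket_antisym:
  assumes "is_lie_bracket br"
  shows "br x y = vscale (-1) (br y x)"
proof -
  have add_left: "br (vadd x y) z = vadd (br x z) (br y z)"
    and add_right: "br x (vadd y z) = vadd (br x y) (br x z)"
    and alt: "br x x = vzero" for x y z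
    using assms unfolding is_lie_bracket_def by blast+
  have "vzero = br (vadd x y) (vadd x y)"
    by (simp only: alt)
  also have "\<dots> = vadd (vadd (br x x) (br y x)) (vadd (br x y) (br y y))"
    by (simp only: add_left add_right)
  also have "\<dots> = vadd (br x y) (br y x)"
    by (simp add: alt fun_eq_iff)
  finally have "br x y a + br y x a = 0" for a
    by (metis vadd_apply vzero_apply)
  then show ?thesis
    by (simp add: fun_eq_iff eq_neg_iff_add_eq_0)
qed

lemma lie_ideal_bracket_right:
  assumes "is_lie_bracket br" "is_ideal br UNIV N" "x \<in> N"
  shows "br x y \<in> N"
  using assms lie_bracket_antisym[OF assms(1), of x y] unfolding is_ideal_def is_subspace_def
  by auto

lemma subalgebra_slicewise:
  fixes C :: "'i::finite \<Rightarrow> 'i \<Rightarrow> 'i \<Rightarrow> 'k::field"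
  assumes "is_subalgebra (sc_bracket C) V"
  shows "is_subalgebra (exp_bracket C) (slicewise V :: ('s::{finite,ab_semigroup_mult} \<times> 'i \<Rightarrow> 'k) set)"
proof -
  have V: "is_subspace V" and closed: "\<And>x y. x \<in> V \<Longrightarrow> y \<in> V \<Longrightarrow> sc_bracket C x y \<in> V"
    using assms unfolding is_subalgebra_def by blast+
  have "exp_bracket C x y \<in> slicewise V"
    if "x \<in> slicewise V" "y \<in> slicewise V" for x y :: "'s \<times> 'i \<Rightarrow> 'k"
    using that by (intro exp_bracket_in_slicewise V closed) (simp_all add: slicewise_def)
  then show ?thesis
    using subspace_slicewise[OF V] unfolding is_subalgebra_def by blast
qed

lemma exp_bracket_ideal_right:
  assumes "is_ideal (sc_bracket C) UNIV N" "y \<in> slicewise N"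
  shows "exp_bracket C x y \<in> slicewise N"
  using assms unfolding is_ideal_def slicewise_def
  by (intro exp_bracket_in_slicewise[unfolded slicewise_def]) auto

lemma exp_bracket_ideal_left:
  assumes "is_lie_bracket (sc_bracket C)" "is_ideal (sc_bracket C) UNIV N" "x \<in> slicewise N"
  shows "exp_bracket C x y \<in> slicewise N"
  using assms lie_ideal_bracket_right[OF assms(1,2)] unfolding is_ideal_def slicewise_def
  by (intro exp_bracket_in_slicewise[unfolded slicewise_def]) auto

lemma solvable_ideal_split_expansion:
  fixes C :: "'i::finite \<Rightarrow> 'i \<Rightarrow> 'i \<Rightarrow> 'k::field"
  assumes lie: "is_lie_bracket (sc_bracket C)"
    and levi: "is_levi_decomp (sc_bracket C) UNIV N S"
  shows "solvable_ideal_split (exp_bracket C)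
    (tens_space N) (tens_space S :: ('s::{finite,ab_semigroup_mult} \<times> 'i \<Rightarrow> 'k) set)"
proof -
  have radical_N: "is_radical (sc_bracket C) UNIV N" and semisimple_S: "is_semisimple (sc_bracket C) S"
    and NS: "N \<inter> S = {vzero}" "ssum N S = UNIV"
    using levi unfolding is_levi_decomp_def by blast+
  then have N: "is_ideal (sc_bracket C) UNIV N" "is_solvable (sc_bracket C) N" "is_subspace N"
    unfolding is_radical_def is_ideal_def by blast+
  have S: "is_subalgebra (sc_bracket C) S"
    using semisimple_S unfolding is_semisimple_def by blast
  then have S_subspace: "is_subspace S"
    unfolding is_subalgebra_def by blast
  have "(tens_space N :: ('s \<times> 'i \<Rightarrow> 'k) set) = slicewise N"
    and "(tens_space S :: ('s \<times> 'i \<Rightarrow> 'k) set) = slicewise S"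
    using tens_space_eq_slicewise N(3) S_subspace by blast+
  then show ?thesis
  proof (simp only:, unfold_locales)
    show "exp_bracket C (vadd x y) z = vadd (exp_bracket C x z) (exp_bracket C y z)"
      and "exp_bracket C x (vadd y z) = vadd (exp_bracket C x y) (exp_bracket C x z)" for x y z
      by (rule exp_bracket_add_left exp_bracket_add_right)+
    show "is_subspace (slicewise N)"
      using N(3) by (rule subspace_slicewise)
    show "exp_bracket C x y \<in> slicewise N" if "y \<in> slicewise N" for x y
      using N(1) that by (rule exp_bracket_ideal_right)
    show "exp_bracket C x y \<in> slicewise N" if "x \<in> slicewise N" for x y
      using lie N(1) that by (rule exp_bracket_ideal_left)
    show "is_solvable (exp_bracket C) (slicewise N)"
      using N(3,2) by (rule solvable_slicewise)
    show "slicewise N \<inter> slicewise S = {vzero}"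
      using NS(1) by (simp flip: slicewise_Int)
    show "ssum (slicewise N) (slicewise S) = UNIV"
      using NS(2) by (simp add: ssum_slicewise)
    show "is_subalgebra (exp_bracket C) (slicewise S :: ('s \<times> 'i \<Rightarrow> 'k) set)"
      using S by (rule subalgebra_slicewise)
  qed
qed

theorem theorem4:
  fixes C :: "'i::finite \<Rightarrow> 'i \<Rightarrow> 'i \<Rightarrow> 'k::field_char_0"
    and N S :: "('i \<Rightarrow> 'k) set"
    and N' S_exp :: "('s::{finite,ab_semigroup_mult} \<times> 'i \<Rightarrow> 'k) set"
  assumes lie: "is_lie_bracket (sc_bracket C)"
    and levi_G: "is_levi_decomp (sc_bracket C) UNIV N S"
    and levi_ES: "is_levi_decomp (exp_bracket C) (tens_space S :: ('s \<times> 'i \<Rightarrow> 'k) set) N' S_exp"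
  shows "is_radical (exp_bracket C) UNIV (ssum (tens_space N :: ('s \<times> 'i \<Rightarrow> 'k) set) N')
       \<and> is_levi_decomp (exp_bracket C) UNIV (ssum (tens_space N :: ('s \<times> 'i \<Rightarrow> 'k) set) N') S_exp"
proof -
  interpret solvable_ideal_split "exp_bracket C" "tens_space N" "tens_space S :: ('s \<times> 'i \<Rightarrow> 'k) set"
    using lie levi_G by (rule solvable_ideal_split_expansion)
  have "is_levi_decomp (exp_bracket C) UNIV (ssum (tens_space N) N') S_exp"
    using levi_ES by (rule levi_decomp_ssum)
  then show ?thesis
    unfolding is_levi_decomp_def by blast
qed

end
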